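(* Let $X$ be a reflexive complex Banach space and let $A,B$ be positive self-adjoint operators from $X$ to $X^\ast$ with positive lower bound, such that $\operatorname{dom}J_A^\ast\cap\operatorname{dom}J_B^\ast$ is dense in $X$ (so that the form sum $A\dotplus B$ is defined). Let $E$ be a bounded linear operator on $X$ such that $E(\operatorname{dom}A)\subseteq\operatorname{dom}A$, $E(\operatorname{dom}B)\subseteq\operatorname{dom}B$, $E^\ast A\subseteq AE$ and $E^\ast B\subseteq BE$. Then $$E^\ast(A\dotplus B)\subseteq(A\dotplus B)E.$$
   Context: $X^\ast$ denotes the conjugate dual of $X$ (continuous conjugate-linear functionals on $X$); $X$ is identified with $X^{\ast\ast}$. For $v\in X^\ast$, $x\in X$ write $(v,x):=v(x)$ and $(x,v):=\overline{v(x)}$. An operator $A$ from $X$ to $X^\ast$ is positive if $(Ax,x)\ge0$ for all $x\in\operatorname{dom}A$, has positive lower bound if $(Ax,x)\ge\gamma\|x\|^2$ for some $\gamma>0$; its adjoint $A^\ast$ has domain $\{y\in X:x\mapsto(Ax,y)\text{ continuous on }\operatorname{dom}A\}$ and is determined by $(x,A^\ast y)=(Ax,y)$; $A$ is self-adjoint if $A=A^\ast$. For a bounded operator $E$ on $X$, $E^\ast$ is the bounded operator on $X^\ast$ with $(E^\ast v,x)=(v,Ex)$. For positive self-adjoint $A$: $H_A$ is the completion of $\operatorname{ran}A$ with respect to $[Ax,Ay]_A:=(Ax,y)$; $J_A$ is the operator from $H_A$ to $X^\ast$ with $\operatorname{dom}J_A=\operatorname{ran}A$, $J_A(Ax)=Ax$;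 $J_A^\ast$ is the operator from $X$ to $H_A$ with $\operatorname{dom}J_A^\ast=\{y\in X:h\mapsto(J_Ah,y)\text{ continuous on }\operatorname{dom}J_A\}$ and $[h,J_A^\ast y]_A=(J_Ah,y)$. Form sum: $H_{A,B}:=\operatorname{dom}J_A^\ast\cap\operatorname{dom}J_B^\ast$ with inner product $t(x,y)=[J_A^\ast x,J_A^\ast y]_A+[J_B^\ast x,J_B^\ast y]_B$ is a Hilbert space; $A\dotplus B$ has domain $\{x\in H_{A,B}: y\mapsto t(x,y)\text{ continuous on }H_{A,B}\text{ in the norm of }X\}$, and $(A\dotplus B)x$ is the $z\in X^\ast$ with $(z,y)=t(x,y)$ for all $y\in H_{A,B}$. *)

theory Defs
  imports "HOL-Analysis.Analysis"
begin

text \<open>HOL-Analysis has no class of complex vector spaces, so we add one: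
  a real normed vector space with a compatible complex scalar multiplication.\<close>

class cnormed_vector = real_normed_vector +
  fixes scaleC :: "complex \<Rightarrow> 'a \<Rightarrow> 'a"
  assumes scaleC_add_right: "scaleC a (x + y) = scaleC a x + scaleC a y"
    and scaleC_add_left: "scaleC (a + b) x = scaleC a x + scaleC b x"
    and scaleC_scaleC: "scaleC a (scaleC b x) = scaleC (a * b) x"
    and scaleC_one: "scaleC 1 x = x"
    and scaleR_scaleC: "scaleR r x = scaleC (complex_of_real r) x"
    and norm_scaleC: "norm (scaleC a x) = cmod a * norm x"

instantiation complex :: cnormed_vector
begin
definition scaleC_complex :: "complex \<Rightarrow> complex \<Rightarrow> complex" where
  "scaleC_complex a x = a * x"
instance
  by standard (auto simp: scaleC_complex_def algebra_simps norm_mult scaleR_conv_of_real)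
end

text \<open>X* : continuous conjugate-linear functionals; (v,x) = v x.\<close>
definition cdual :: "('a::cnormed_vector \<Rightarrow> complex) set" where
  "cdual = {v. (\<forall>x y. v (x + y) = v x + v y) \<and> (\<forall>c x. v (scaleC c x) = cnj c * v x)
              \<and> (\<exists>K. \<forall>x. cmod (v x) \<le> K * norm x)}"

definition dnorm :: "('a::cnormed_vector \<Rightarrow> complex) \<Rightarrow> real" where
  "dnorm v = (SUP x\<in>{x::'a. norm x \<le> 1}. cmod (v x))"

text \<open>Reflexivity: every continuous conjugate-linear functional on X* is of the form
  v \<mapsto> (x,v) = conj (v x) for some x in X (canonical map X \<rightarrow> X** is onto).\<close>
definition reflexive_space :: "'a::cnormed_vector itself \<Rightarrow> bool" where
  "reflexive_space (_::'a itself) \<longleftrightarrow>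
    (\<forall>\<phi>::('a \<Rightarrow> complex) \<Rightarrow> complex.
       ((\<forall>u\<in>cdual. \<forall>v\<in>cdual. \<phi> (\<lambda>x. u x + v x) = \<phi> u + \<phi> v)
        \<and> (\<forall>c. \<forall>v\<in>cdual. \<phi> (\<lambda>x. c * v x) = cnj c * \<phi> v)
        \<and> (\<exists>K. \<forall>v\<in>cdual. cmod (\<phi> v) \<le> K * dnorm v))
       \<longrightarrow> (\<exists>x::'a. \<forall>v\<in>cdual. \<phi> v = cnj (v x)))"

text \<open>An operator from X to X* is given by its domain D (a linear subspace) and a
  map A, linear on D with values in X*.\<close>
definition is_op :: "'a::cnormed_vector set \<Rightarrow> ('a \<Rightarrow> 'a \<Rightarrow> complex) \<Rightarrow> bool" where
  "is_op D A \<longleftrightarrow> 0 \<in> D \<and> (\<forall>x\<in>D. \<forall>y\<in>D. x + y \<in> D) \<and> (\<forall>c. \<forall>x\<in>D. scaleC c x \<in> D)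
     \<and> (\<forall>x\<in>D. A x \<in> cdual)
     \<and> (\<forall>x\<in>D. \<forall>y\<in>D. A (x + y) = (\<lambda>z. A x z + A y z))
     \<and> (\<forall>c. \<forall>x\<in>D. A (scaleC c x) = (\<lambda>z. c * A x z))"

definition pos_op :: "'a::cnormed_vector set \<Rightarrow> ('a \<Rightarrow> 'a \<Rightarrow> complex) \<Rightarrow> bool" where
  "pos_op D A \<longleftrightarrow> (\<forall>x\<in>D. A x x \<in> \<real> \<and> 0 \<le> Re (A x x))"

definition pos_lower_bound :: "'a::cnormed_vector set \<Rightarrow> ('a \<Rightarrow> 'a \<Rightarrow> complex) \<Rightarrow> bool" where
  "pos_lower_bound D A \<longleftrightarrow> (\<exists>\<gamma>>0. \<forall>x\<in>D. A x x \<in> \<real> \<and> \<gamma> * (norm x)\<^sup>2 \<le> Re (A x x))"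

text \<open>Graph of the adjoint A*: y in dom A* iff x \<mapsto> (Ax,y) is continuous on dom A,
  and A* y = z with (x,z) = conj (z x) = (Ax,y) for all x in dom A.\<close>
definition adjoint_graph :: "'a::cnormed_vector set \<Rightarrow> ('a \<Rightarrow> 'a \<Rightarrow> complex) \<Rightarrow> ('a \<times> ('a \<Rightarrow> complex)) set" where
  "adjoint_graph D A = {(y, z). (\<exists>K. \<forall>x\<in>D. cmod (A x y) \<le> K * norm x) \<and> z \<in> cdual
                          \<and> (\<forall>x\<in>D. cnj (z x) = A x y)}"

definition self_adjoint_op :: "'a::cnormed_vector set \<Rightarrow> ('a \<Rightarrow> 'a \<Rightarrow> complex) \<Rightarrow> bool" where
  "self_adjoint_op D A \<longleftrightarrow> adjoint_graph D A = {(x, A x) | x. x \<in> D}"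

definition is_ip :: "('h::cnormed_vector \<Rightarrow> 'h \<Rightarrow> complex) \<Rightarrow> bool" where
  "is_ip ip \<longleftrightarrow> (\<forall>u v w. ip (u + v) w = ip u w + ip v w)
     \<and> (\<forall>c u v. ip (scaleC c u) v = c * ip u v)
     \<and> (\<forall>u v. ip u v = cnj (ip v u))
     \<and> (\<forall>u. ip u u = complex_of_real ((norm u)\<^sup>2))"

text \<open>(H, ip, \<iota>) is a completion of ran A w.r.t. [Ax,Ay]_A = (Ax,y): H is a Hilbert space
  (completeness comes from the type class of 'h), \<iota> is a linear embedding of ran A
  preserving the inner product, with dense image.\<close>
definition energy_completion ::
  "'a::cnormed_vector set \<Rightarrow> ('a \<Rightarrow> 'a \<Rightarrow> complex) \<Rightarrow> ('h::{cnormed_vector,banach} \<Rightarrow> 'h \<Rightarrow> complex)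
     \<Rightarrow> (('a \<Rightarrow> complex) \<Rightarrow> 'h) \<Rightarrow> bool" where
  "energy_completion D A ip \<iota> \<longleftrightarrow> is_ip ip
     \<and> (\<forall>f\<in>A ` D. \<forall>g\<in>A ` D. \<iota> (\<lambda>z. f z + g z) = \<iota> f + \<iota> g)
     \<and> (\<forall>c. \<forall>f\<in>A ` D. \<iota> (\<lambda>z. c * f z) = scaleC c (\<iota> f))
     \<and> (\<forall>x\<in>D. \<forall>y\<in>D. ip (\<iota> (A x)) (\<iota> (A y)) = A x y)
     \<and> closure (\<iota> ` A ` D) = UNIV"

text \<open>dom J_A* : y such that h \<mapsto> (J_A h, y) is continuous on dom J_A = ran A (in H_A).\<close>
definition Jstar_dom ::
  "'a::cnormed_vector set \<Rightarrow> ('a \<Rightarrow> 'a \<Rightarrow> complex) \<Rightarrow> (('a \<Rightarrow> complex) \<Rightarrow> 'h::real_normed_vector) \<Rightarrow> 'a set" where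
  "Jstar_dom D A \<iota> = {y. \<exists>K. \<forall>x\<in>D. cmod (A x y) \<le> K * norm (\<iota> (A x))}"

text \<open>J_A* y : the element w of H_A with [h, w]_A = (J_A h, y) for all h in ran A.\<close>
definition Jstar ::
  "'a::cnormed_vector set \<Rightarrow> ('a \<Rightarrow> 'a \<Rightarrow> complex) \<Rightarrow> ('h \<Rightarrow> 'h \<Rightarrow> complex)
     \<Rightarrow> (('a \<Rightarrow> complex) \<Rightarrow> 'h) \<Rightarrow> 'a \<Rightarrow> 'h" where
  "Jstar D A ip \<iota> y = (THE w. \<forall>x\<in>D. ip (\<iota> (A x)) w = A x y)"

definition form_space where
  "form_space DA A \<iota>A DB B \<iota>B = Jstar_dom DA A \<iota>A \<inter> Jstar_dom DB B \<iota>B"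

definition form_t where
  "form_t DA A ipA \<iota>A DB B ipB \<iota>B x y =
     ipA (Jstar DA A ipA \<iota>A x) (Jstar DA A ipA \<iota>A y) + ipB (Jstar DB B ipB \<iota>B x) (Jstar DB B ipB \<iota>B y)"

definition formsum_dom where
  "formsum_dom DA A ipA \<iota>A DB B ipB \<iota>B =
     {x \<in> form_space DA A \<iota>A DB B \<iota>B. \<exists>K. \<forall>y \<in> form_space DA A \<iota>A DB B \<iota>B.
        cmod (form_t DA A ipA \<iota>A DB B ipB \<iota>B x y) \<le> K * norm y}"

definition formsum where
  "formsum DA A ipA \<iota>A DB B ipB \<iota>B x =
     (THE z. z \<in> cdual \<and> (\<forall>y \<in> form_space DA A \<iota>A DB B \<iota>B. z y = form_t DA A ipA \<iota>A DB B ipB \<iota>B x y))"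

definition dual_op :: "('a \<Rightarrow> 'a) \<Rightarrow> ('a \<Rightarrow> complex) \<Rightarrow> ('a \<Rightarrow> complex)" where
  "dual_op E v = (\<lambda>x. v (E x))"

end

theory Submission
  imports Defs
begin

text \<open>The form sum is the operator associated with the form
  t(x,y) = [J_A* x, J_A* y]_A + [J_B* x, J_B* y]_B on the dense subspace dom J_A* \<inter> dom J_B*.
  For a bounded E it therefore suffices that E leaves this form domain invariant and is symmetric
  for t, i.e. t(Ex,y) = t(x,Ey); the inclusion E*(A \<dotplus> B) \<subseteq> (A \<dotplus> B)E then follows from the
  definition of the associated operator.

  Both properties hold as soon as E is bounded in the energy norm \<parallel>Au\<parallel>_A = (Au,u)^(1/2):
  then Au \<mapsto> AEu extends to a bounded operator on H_A, which maps J_A* x to J_A* (Ex) and is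
  symmetric because E*A \<subseteq> AE. The energy bound is a log-convexity argument: e_k = \<parallel>AE^k u\<parallel>_A
  satisfies e_(k+1)^2 = (AE^k u, E^(k+2) u) \<le> e_k e_(k+2) by Cauchy-Schwarz in H_A, while
  e_k^2 = (Au, E^(2k) u) grows at most like \<parallel>E\<parallel>^(2k). A log-convex sequence with
  e_1 > \<parallel>E\<parallel> e_0 would grow faster than that, so \<parallel>AEu\<parallel>_A \<le> \<parallel>E\<parallel> \<parallel>Au\<parallel>_A.\<close>

lemma scaleC_zero_right [simp]: "scaleC c (0::'a::cnormed_vector) = 0"
  using scaleC_add_right[of c 0 0] by simp

lemma scaleC_minus_one: "scaleC (-1) (x::'a::cnormed_vector) = - x"
  using scaleR_scaleC[of "-1" x] by simp

lemma bounded_linear_scaleC: "bounded_linear (\<lambda>x::'a::cnormed_vector. scaleC c x)"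
  by (rule bounded_linear_intro[where K="cmod c"])
    (auto simp: scaleC_add_right scaleR_scaleC scaleC_scaleC mult.commute norm_scaleC)

lemma cdualI:
  assumes "\<And>x y. v (x + y) = v x + v y" and "\<And>c x. v (scaleC c x) = cnj c * v x"
    and "\<And>x. cmod (v x) \<le> K * norm x"
  shows "v \<in> cdual"
  unfolding cdual_def using assms by blast

lemma cdual_add: "v \<in> cdual \<Longrightarrow> v (x + y) = v x + v y"
  unfolding cdual_def by blast

lemma cdual_scaleC: "v \<in> cdual \<Longrightarrow> v (scaleC c x) = cnj c * v x"
  unfolding cdual_def by blast

lemma cdual_bounded:
  assumes "v \<in> cdual"
  shows "\<exists>K\<ge>0. \<forall>x. cmod (v x) \<le> K * norm x"
proof -
  obtain K where K: "\<And>x. cmod (v x) \<le> K * norm x"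
    using assms unfolding cdual_def by blast
  have "cmod (v x) \<le> max K 0 * norm x" for x
    using K[of x] mult_right_mono[of K "max K 0" "norm x"] by simp
  then show ?thesis
    by (intro exI[of _ "max K 0"]) auto
qed

lemma cdual_bounded_linear:
  assumes "v \<in> cdual"
  shows "bounded_linear v"
proof -
  obtain K where "\<forall>x. cmod (v x) \<le> K * norm x"
    using cdual_bounded[OF assms] by blast
  then show ?thesis
    using assms
    by (intro bounded_linear_intro[where K=K])
      (auto simp: cdual_add scaleR_scaleC cdual_scaleC scaleC_complex_def mult.commute)
qed

lemma cdual_eq_if_eq_on_dense:
  assumes "v \<in> cdual" "w \<in> cdual" "closure S = UNIV" "\<forall>y\<in>S. v y = w y"
  shows "v = w"
proof -
  have "closed {y. v y = w y}"
    by (intro closed_Collect_eq linear_continuous_on cdual_bounded_linear assms)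
  then have "closure S \<subseteq> {y. v y = w y}"
    using assms(4) by (intro closure_minimal) auto
  then show ?thesis
    using assms(3) by auto
qed

lemma dual_op_in_cdual:
  assumes v: "v \<in> cdual" and E: "bounded_linear E" "\<And>c x. E (scaleC c x) = scaleC c (E x)"
  shows "dual_op E v \<in> cdual"
proof -
  obtain K where K: "\<And>x. cmod (v x) \<le> K * norm x" "K \<ge> 0"
    using cdual_bounded[OF v] by blast
  obtain N where N: "\<And>x. norm (E x) \<le> norm x * N" "N > 0"
    using bounded_linear.pos_bounded[OF E(1)] by blast
  have "cmod (v (E x)) \<le> (K * N) * norm x" for x
  proof -
    have "cmod (v (E x)) \<le> K * norm (E x)"
      by (rule K(1))
    also have "\<dots> \<le> K * (norm x * N)"
      by (intro mult_left_mono N K)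
    finally show ?thesis
      by (simp add: mult_ac)
  qed
  then show ?thesis
    unfolding dual_op_def
    by (intro cdualI) (auto simp: linear_add[OF bounded_linear.linear[OF E(1)]] E(2)
        cdual_add[OF v] cdual_scaleC[OF v])
qed

lemma cdual_extension:
  fixes S :: "'a::cnormed_vector set" and f :: "'a \<Rightarrow> complex"
  assumes S_add: "\<And>a b. a \<in> S \<Longrightarrow> b \<in> S \<Longrightarrow> a + b \<in> S"
    and S_scaleC: "\<And>c a. a \<in> S \<Longrightarrow> scaleC c a \<in> S"
    and f_add: "\<And>a b. a \<in> S \<Longrightarrow> b \<in> S \<Longrightarrow> f (a + b) = f a + f b"
    and f_scaleC: "\<And>c a. a \<in> S \<Longrightarrow> f (scaleC c a) = cnj c * f a"
    and f_bound: "\<And>a. a \<in> S \<Longrightarrow> cmod (f a) \<le> K * norm a"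
    and dense: "closure S = UNIV"
  shows "\<exists>v\<in>cdual. \<forall>y\<in>S. v y = f y"
proof -
  define L where "L = max K 0"
  have f_bound': "cmod (f a) \<le> L * norm a" if "a \<in> S" for a
    using f_bound[OF that] mult_right_mono[of K L "norm a"] by (simp add: L_def)
  have f_diff: "f a - f b = f (a + scaleC (-1) b)" if "a \<in> S" "b \<in> S" for a b
    using that by (simp add: f_add f_scaleC S_scaleC)
  have "L-lipschitz_on S f"
  proof (rule lipschitz_onI)
    fix a b assume ab: "a \<in> S" "b \<in> S"
    then have "a + scaleC (-1) b \<in> S"
      by (intro S_add S_scaleC)
    then show "dist (f a) (f b) \<le> L * dist a b"
      using f_bound' ab by (simp add: dist_norm f_diff scaleC_minus_one)
  qed (simp add: L_def)
  then have "uniformly_continuous_on S f"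
    by (rule lipschitz_on_uniformly_continuous)
  then obtain g where g_uc: "uniformly_continuous_on UNIV g" and g_f: "\<And>x. x \<in> S \<Longrightarrow> f x = g x"
    using uniformly_continuous_on_extension_on_closure[of S f] dense by metis
  have g_cont: "continuous_on UNIV g"
    using g_uc by (rule uniformly_continuous_imp_continuous)
  have g_add: "g (a + b) = g a + g b" for a b
  proof -
    have "closed {p. g (fst p + snd p) = g (fst p) + g (snd p)}"
    proof (intro closed_Collect_eq)
      show "continuous_on UNIV (\<lambda>p. g (fst p + snd p))"
        by (rule continuous_on_compose2[OF g_cont])
          (auto intro!: continuous_on_add continuous_on_fst continuous_on_snd continuous_on_id)
      show "continuous_on UNIV (\<lambda>p. g (fst p) + g (snd p))"
        by (intro continuous_on_add; rule continuous_on_compose2[OF g_cont])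
          (auto intro!: continuous_on_fst continuous_on_snd continuous_on_id)
    qed
    moreover have "S \<times> S \<subseteq> {p. g (fst p + snd p) = g (fst p) + g (snd p)}"
      using g_f f_add S_add by auto
    ultimately have "closure (S \<times> S) \<subseteq> {p. g (fst p + snd p) = g (fst p) + g (snd p)}"
      by (intro closure_minimal)
    moreover have "(a, b) \<in> closure (S \<times> S)"
      using dense by (simp add: closure_Times)
    ultimately show ?thesis
      by auto
  qed
  have g_scaleC: "g (scaleC c a) = cnj c * g a" for c a
  proof -
    have "closed {a. g (scaleC c a) = cnj c * g a}"
      by (intro closed_Collect_eq continuous_on_mult continuous_on_const g_cont
          continuous_on_compose2[OF g_cont] linear_continuous_on bounded_linear_scaleC) auto
    moreover have "S \<subseteq> {a. g (scaleC c a) = cnj c * g a}"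
      using g_f f_scaleC S_scaleC by auto
    ultimately have "closure S \<subseteq> {a. g (scaleC c a) = cnj c * g a}"
      by (intro closure_minimal)
    then show ?thesis
      using dense by auto
  qed
  have g_bound: "cmod (g a) \<le> L * norm a" for a
  proof -
    have "closed {a. cmod (g a) \<le> L * norm a}"
      by (intro closed_Collect_le continuous_intros continuous_on_norm g_cont)
    moreover have "S \<subseteq> {a. cmod (g a) \<le> L * norm a}"
      using g_f f_bound' by auto
    ultimately have "closure S \<subseteq> {a. cmod (g a) \<le> L * norm a}"
      by (intro closure_minimal)
    then show ?thesis
      using dense by auto
  qed
  have "g \<in> cdual"
    by (rule cdualI[OF g_add g_scaleC g_bound])
  then show ?thesis
    using g_f by metis
qed

section \<open>The operator associated with a form\<close>

definition form_operator_dom :: "'a::cnormed_vector set \<Rightarrow> ('a \<Rightarrow> 'a \<Rightarrow> complex) \<Rightarrow> 'a set" where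
  "form_operator_dom S t = {x \<in> S. \<exists>K. \<forall>y\<in>S. cmod (t x y) \<le> K * norm y}"

definition form_operator ::
  "'a::cnormed_vector set \<Rightarrow> ('a \<Rightarrow> 'a \<Rightarrow> complex) \<Rightarrow> 'a \<Rightarrow> ('a \<Rightarrow> complex)" where
  "form_operator S t x = (THE z. z \<in> cdual \<and> (\<forall>y\<in>S. z y = t x y))"

context
  fixes S :: "'a::cnormed_vector set" and t :: "'a \<Rightarrow> 'a \<Rightarrow> complex"
  assumes S_add: "\<And>a b. a \<in> S \<Longrightarrow> b \<in> S \<Longrightarrow> a + b \<in> S"
    and S_scaleC: "\<And>c a. a \<in> S \<Longrightarrow> scaleC c a \<in> S"
    and S_dense: "closure S = UNIV"
    and t_add: "\<And>x a b. a \<in> S \<Longrightarrow> b \<in> S \<Longrightarrow> t x (a + b) = t x a + t x b"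
    and t_scaleC: "\<And>x c a. a \<in> S \<Longrightarrow> t x (scaleC c a) = cnj c * t x a"
begin

lemma form_operator_eqI:
  assumes "z \<in> cdual" "\<forall>y\<in>S. z y = t x y"
  shows "form_operator S t x = z"
  unfolding form_operator_def
  using assms cdual_eq_if_eq_on_dense[OF _ _ S_dense] by (intro the_equality) auto

lemma form_operator_represents:
  assumes "x \<in> form_operator_dom S t"
  shows "form_operator S t x \<in> cdual" "\<forall>y\<in>S. form_operator S t x y = t x y"
proof -
  obtain K where "\<And>y. y \<in> S \<Longrightarrow> cmod (t x y) \<le> K * norm y"
    using assms unfolding form_operator_dom_def by blast
  then have "\<exists>z\<in>cdual. \<forall>y\<in>S. z y = t x y"
    by (intro cdual_extension[of S "t x" K] S_add S_scaleC t_add t_scaleC S_dense)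
  then obtain z where "z \<in> cdual" "\<forall>y\<in>S. z y = t x y"
    by blast
  then show "form_operator S t x \<in> cdual" "\<forall>y\<in>S. form_operator S t x y = t x y"
    using form_operator_eqI by auto
qed

lemma form_operator_intertwining:
  assumes E: "bounded_linear E" "\<And>c x. E (scaleC c x) = scaleC c (E x)"
    and E_S: "\<And>y. y \<in> S \<Longrightarrow> E y \<in> S"
    and t_E: "\<And>x y. x \<in> S \<Longrightarrow> y \<in> S \<Longrightarrow> t (E x) y = t x (E y)"
    and x: "x \<in> form_operator_dom S t"
  shows "E x \<in> form_operator_dom S t \<and> dual_op E (form_operator S t x) = form_operator S t (E x)"
proof
  have x_S: "x \<in> S"
    using x unfolding form_operator_dom_def by blast
  let ?z = "form_operator S t x"
  have z: "?z \<in> cdual" "\<And>y. y \<in> S \<Longrightarrow> ?z y = t x y"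
    using form_operator_represents[OF x] by auto
  have Ez: "dual_op E ?z y = t (E x) y" if "y \<in> S" for y
    using that by (simp add: dual_op_def z(2) E_S t_E x_S)
  obtain K where K: "\<And>y. cmod (dual_op E ?z y) \<le> K * norm y"
    using cdual_bounded[OF dual_op_in_cdual[OF z(1) E]] by blast
  have "\<forall>y\<in>S. cmod (t (E x) y) \<le> K * norm y"
    using K Ez by (metis (no_types))
  then show "E x \<in> form_operator_dom S t"
    unfolding form_operator_dom_def using E_S[OF x_S] by blast
  show "dual_op E ?z = form_operator S t (E x)"
    using form_operator_eqI[OF dual_op_in_cdual[OF z(1) E]] Ez by simp
qed

end

lemma closure_image_sequentially:
  fixes f :: "'a \<Rightarrow> 'b::metric_space"
  assumes "y \<in> closure (f ` D)"
  shows "\<exists>us. (\<forall>n. us n \<in> D) \<and> (\<lambda>n. f (us n)) \<longlonglongrightarrow> y"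
proof -
  obtain s where s: "\<forall>n. s n \<in> f ` D" "s \<longlonglongrightarrow> y"
    using assms unfolding closure_sequential by blast
  then have "\<forall>n. \<exists>u. u \<in> D \<and> s n = f u"
    by blast
  then obtain us where "\<forall>n. us n \<in> D \<and> s n = f (us n)"
    by metis
  moreover from this have "(\<lambda>n. f (us n)) = s"
    by auto
  ultimately show ?thesis
    using s(2) by auto
qed

lemma log_convex_ratio_le:
  fixes e :: "nat \<Rightarrow> real"
  assumes nonneg: "\<And>k. 0 \<le> e k"
    and log_convex: "\<And>k. (e (Suc k))\<^sup>2 \<le> e k * e (Suc (Suc k))"
    and growth: "\<And>k. (e k)\<^sup>2 \<le> L * N ^ (2 * k)"
    and N: "N > 0"
  shows "e 1 \<le> N * e 0"
proof (rule ccontr)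
  assume "\<not> e 1 \<le> N * e 0"
  then have big: "e 1 > N * e 0"
    by simp
  have e0: "e 0 > 0"
  proof (rule ccontr)
    assume "\<not> e 0 > 0"
    then have "e 0 = 0"
      using nonneg[of 0] by simp
    then show False
      using log_convex[of 0] big by simp
  qed
  define \<rho> where "\<rho> = e 1 / e 0"
  have \<rho>: "\<rho> > N"
    using big e0 by (simp add: \<rho>_def field_simps)
  have ratio: "e (Suc k) \<ge> \<rho> * e k \<and> e k > 0" for k
  proof (induction k)
    case 0
    then show ?case
      using e0 by (simp add: \<rho>_def)
  next
    case (Suc k)
    then have ek: "e k > 0" and step: "e (Suc k) \<ge> \<rho> * e k"
      by auto
    have ek1: "e (Suc k) > 0"
      using step ek \<rho> N by (meson less_trans mult_pos_pos order_less_le_trans)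
    have "e k * (\<rho> * e (Suc k)) \<le> e (Suc k) * e (Suc k)"
      using mult_right_mono[OF step, of "e (Suc k)"] ek1 by (simp add: mult_ac)
    also have "\<dots> \<le> e k * e (Suc (Suc k))"
      using log_convex[of k] by (simp add: power2_eq_square)
    finally show ?case
      using ek ek1 by simp
  qed
  have geometric: "\<rho> ^ k * e 0 \<le> e k" for k
  proof (induction k)
    case (Suc k)
    then have "\<rho> ^ Suc k * e 0 \<le> \<rho> * e k"
      using \<rho> N by simp
    then show ?case
      using ratio[of k] by simp
  qed simp
  define q where "q = (\<rho> / N)\<^sup>2"
  have "q > 1"
    using \<rho> N by (simp add: q_def)
  then obtain n where n: "L / (e 0)\<^sup>2 < q ^ n"
    using real_arch_pow by blast
  have "q ^ n * N ^ (2 * n) = \<rho> ^ (2 * n)"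
    using N by (simp add: q_def power_mult[symmetric] power_divide)
  then have "q ^ n * N ^ (2 * n) * (e 0)\<^sup>2 = (\<rho> ^ n * e 0)\<^sup>2"
    by (simp add: power_mult_distrib power_mult mult.commute[of 2 n])
  also have "\<dots> \<le> (e n)\<^sup>2"
    using geometric[of n] e0 \<rho> N by (intro power_mono) auto
  also have "\<dots> \<le> L * N ^ (2 * n)"
    by (rule growth)
  finally have "q ^ n * (e 0)\<^sup>2 \<le> L"
    using N by (simp add: mult.commute mult.left_commute)
  then show False
    using n e0 by (simp add: field_simps)
qed

lemma Cauchy_if_dist_le:
  fixes a :: "nat \<Rightarrow> 'a::metric_space" and b :: "nat \<Rightarrow> 'b::metric_space"
  assumes "Cauchy a" and "\<And>m n. dist (b m) (b n) \<le> N * dist (a m) (a n)" and "N > 0"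
  shows "Cauchy b"
proof (rule metric_CauchyI)
  fix \<epsilon> :: real assume "\<epsilon> > 0"
  then obtain M where "\<forall>m\<ge>M. \<forall>n\<ge>M. dist (a m) (a n) < \<epsilon> / N"
    using assms(1,3) metric_CauchyD by (metis divide_pos_pos)
  then have "\<forall>m\<ge>M. \<forall>n\<ge>M. dist (b m) (b n) < \<epsilon>"
    using assms(2,3) by (smt (verit) mult.commute pos_less_divide_eq)
  then show "\<exists>M. \<forall>m\<ge>M. \<forall>n\<ge>M. dist (b m) (b n) < \<epsilon>"
    by blast
qed

section \<open>Complex inner product spaces\<close>

locale complex_inner =
  fixes ip :: "'h::{cnormed_vector,banach} \<Rightarrow> 'h \<Rightarrow> complex"
  assumes is_ip: "is_ip ip"
begin

lemma ip_add_left: "ip (u + v) w = ip u w + ip v w"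
  using is_ip unfolding is_ip_def by blast

lemma ip_scaleC_left: "ip (scaleC c u) v = c * ip u v"
  using is_ip unfolding is_ip_def by blast

lemma ip_cnj_commute: "ip u v = cnj (ip v u)"
  using is_ip unfolding is_ip_def by blast

lemma ip_self: "ip u u = complex_of_real ((norm u)\<^sup>2)"
  using is_ip unfolding is_ip_def by blast

lemma ip_add_right: "ip w (u + v) = ip w u + ip w v"
  by (metis ip_cnj_commute ip_add_left complex_cnj_add)

lemma ip_scaleC_right: "ip u (scaleC c v) = cnj c * ip u v"
  by (metis ip_cnj_commute ip_scaleC_left complex_cnj_mult)

lemma ip_scaleR_left: "ip (scaleR r u) v = r * ip u v"
  by (simp add: scaleR_scaleC ip_scaleC_left)

lemma ip_scaleR_right: "ip u (scaleR r v) = r * ip u v"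
  by (simp add: scaleR_scaleC ip_scaleC_right)

lemma ip_zero_right [simp]: "ip u 0 = 0"
  using ip_scaleC_right[of u 0 0] by simp

lemma norm_square_eq_Re_ip: "(norm u)\<^sup>2 = Re (ip u u)"
  by (simp add: ip_self)

lemma ip_minus_right: "ip v (- u) = - ip v u"
  using ip_scaleC_right[of v "-1" u] by (simp add: scaleC_minus_one)

lemma ip_diff_right: "ip w (u - v) = ip w u - ip w v"
  by (simp only: diff_conv_add_uminus ip_add_right ip_minus_right)

lemma norm_add_square: "(norm (a + b))\<^sup>2 = (norm a)\<^sup>2 + (norm b)\<^sup>2 + 2 * Re (ip a b)"
proof -
  have "Re (ip b a) = Re (ip a b)"
    by (subst ip_cnj_commute) simp
  then show ?thesis
    using norm_square_eq_Re_ip[of "a + b"] norm_square_eq_Re_ip[of a] norm_square_eq_Re_ip[of b]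
    by (simp add: ip_add_left ip_add_right)
qed

lemma parallelogram_law:
  "(norm (a + b :: 'h))\<^sup>2 + (norm (a - b))\<^sup>2 = 2 * (norm a)\<^sup>2 + 2 * (norm b)\<^sup>2"
  using norm_add_square[of a b] norm_add_square[of a "- b"] by (simp add: ip_minus_right)

lemma Re_ip_le: "Re (ip a b) \<le> norm a * norm b"
proof (cases "b = 0")
  case False
  define p where "p = Re (ip a b)"
  define s where "s = - p / (norm b)\<^sup>2"
  have "0 \<le> (norm (a + scaleR s b))\<^sup>2"
    by simp
  also have "\<dots> = (norm a)\<^sup>2 + s\<^sup>2 * (norm b)\<^sup>2 + 2 * s * p"
    by (simp add: norm_add_square ip_scaleR_right p_def power_mult_distrib)
  also have "\<dots> = (norm a)\<^sup>2 - p\<^sup>2 / (norm b)\<^sup>2"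
    using False by (simp add: s_def field_simps power2_eq_square)
  finally have "p\<^sup>2 \<le> (norm a * norm b)\<^sup>2"
    using False by (simp add: field_simps)
  then show ?thesis
    unfolding p_def by (rule power2_le_imp_le) simp
qed simp

lemma norm_ip_le: "cmod (ip a b) \<le> norm a * norm b"
proof (cases "ip a b = 0")
  case False
  define c where "c = cnj (ip a b) / cmod (ip a b)"
  have "ip (scaleC c a) b = cmod (ip a b)"
    using False complex_norm_square[of "ip a b"]
    by (simp add: ip_scaleC_left c_def power2_eq_square field_simps)
  then have "cmod (ip a b) = Re (ip (scaleC c a) b)"
    by simp
  also have "\<dots> \<le> norm (scaleC c a) * norm b"
    by (rule Re_ip_le)
  finally show ?thesis
    using False by (simp add: norm_scaleC c_def norm_divide)
qed simp

lemma bounded_linear_ip_left: "bounded_linear (\<lambda>h. ip h d)"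
  by (rule bounded_linear_intro[where K="norm d"])
    (auto simp: ip_add_left ip_scaleR_left scaleR_conv_of_real norm_ip_le)

lemma bounded_linear_ip_right: "bounded_linear (\<lambda>h. ip d h)"
proof (rule bounded_linear_intro[where K="norm d"])
  show "cmod (ip d h) \<le> norm h * norm d" for h
    using norm_ip_le[of d h] by (simp add: mult.commute)
qed (simp_all add: ip_add_right ip_scaleR_right scaleR_conv_of_real)

lemma ip_right_eq_if_dense:
  assumes "closure S = UNIV" "\<forall>h\<in>S. ip h w1 = ip h w2"
  shows "w1 = w2"
proof -
  have "closed {h. ip h (w1 - w2) = 0}"
    by (intro closed_Collect_eq continuous_on_const linear_continuous_on bounded_linear_ip_left)
  then have "closure S \<subseteq> {h. ip h (w1 - w2) = 0}"
    using assms(2) by (intro closure_minimal) (auto simp: ip_diff_right)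
  then have "ip (w1 - w2) (w1 - w2) = 0"
    using assms(1) by auto
  then show ?thesis
    by (simp add: ip_self)
qed

end

lemma quadratic_bound_imp_zero:
  fixes d :: complex and G :: real
  assumes G: "0 \<le> G" and bound: "\<And>t. 2 * Re (t * d) \<le> (cmod t)\<^sup>2 * G"
  shows "d = 0"
proof (rule ccontr)
  assume "d \<noteq> 0"
  define s where "s = 1 / (G + 1)"
  have s: "s > 0" "s * G < 1"
    using G by (simp_all add: s_def)
  define t where "t = complex_of_real s * cnj d"
  have "t * d = complex_of_real (s * (cmod d)\<^sup>2)"
    unfolding t_def using complex_norm_square[of d] by (simp add: mult.commute mult.left_commute)
  moreover have "cmod t = s * cmod d"
    using s by (simp add: t_def norm_mult)
  ultimately have "2 * (s * (cmod d)\<^sup>2) \<le> (s * cmod d)\<^sup>2 * G"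
    using bound[of t] by simp
  then have "2 * (s * (cmod d)\<^sup>2) \<le> (s * (cmod d)\<^sup>2) * (s * G)"
    by (simp add: power2_eq_square mult_ac)
  then have "2 \<le> s * G"
    using s \<open>d \<noteq> 0\<close> by (simp add: mult_le_cancel_left_pos)
  then show False
    using s by simp
qed

text \<open>The representing vector is the limit of g along a minimising sequence of
  \<parallel>g u\<parallel>^2 - 2 Re (f u); the parallelogram law makes every minimising sequence Cauchy.\<close>

context complex_inner
begin

context
  fixes D :: "'b::cnormed_vector set" and g :: "'b \<Rightarrow> 'h" and f :: "'b \<Rightarrow> complex"
  assumes D_add: "\<And>u v. u \<in> D \<Longrightarrow> v \<in> D \<Longrightarrow> u + v \<in> D"
    and D_scaleC: "\<And>c u. u \<in> D \<Longrightarrow> scaleC c u \<in> D"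
    and g_add: "\<And>u v. u \<in> D \<Longrightarrow> v \<in> D \<Longrightarrow> g (u + v) = g u + g v"
    and g_scaleC: "\<And>c u. u \<in> D \<Longrightarrow> g (scaleC c u) = scaleC c (g u)"
    and f_add: "\<And>u v. u \<in> D \<Longrightarrow> v \<in> D \<Longrightarrow> f (u + v) = f u + f v"
    and f_scaleC: "\<And>c u. u \<in> D \<Longrightarrow> f (scaleC c u) = c * f u"
begin

abbreviation energy_functional :: "'b \<Rightarrow> real" where
  "energy_functional u \<equiv> (norm (g u))\<^sup>2 - 2 * Re (f u)"

lemma energy_functional_midpoint:
  assumes u: "u \<in> D" and v: "v \<in> D" and lower: "\<forall>x\<in>D. m \<le> energy_functional x"
  shows "(norm (g u - g v))\<^sup>2 \<le> 2 * (energy_functional u - m) + 2 * (energy_functional v - m)"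
proof -
  define w where "w = scaleC (1/2) (u + v)"
  have "w \<in> D"
    unfolding w_def using u v by (intro D_scaleC D_add)
  moreover have "4 * (norm (g w))\<^sup>2 = (norm (g u + g v))\<^sup>2"
    unfolding w_def using u v by (simp add: g_scaleC g_add D_add norm_scaleC power_divide)
  moreover have "2 * Re (f w) = Re (f u) + Re (f v)"
    unfolding w_def using u v by (simp add: f_scaleC f_add D_add)
  ultimately show ?thesis
    using lower parallelogram_law[of "g u" "g v"] by fastforce
qed

lemma energy_functional_minimizing_Cauchy:
  assumes us: "\<And>n. us n \<in> D" and lim: "(\<lambda>n. energy_functional (us n)) \<longlonglongrightarrow> m"
    and lower: "\<forall>x\<in>D. m \<le> energy_functional x"
  shows "Cauchy (\<lambda>n. g (us n))"
proof (rule metric_CauchyI)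
  fix \<epsilon> :: real assume "\<epsilon> > 0"
  then obtain M where M: "\<And>n. n \<ge> M \<Longrightarrow> \<bar>energy_functional (us n) - m\<bar> < \<epsilon>\<^sup>2 / 4"
    using LIMSEQ_D[OF lim, of "\<epsilon>\<^sup>2 / 4"] by auto
  have "dist (g (us n)) (g (us k)) < \<epsilon>" if "n \<ge> M" "k \<ge> M" for n k
  proof -
    have "(dist (g (us n)) (g (us k)))\<^sup>2
            \<le> 2 * (energy_functional (us n) - m) + 2 * (energy_functional (us k) - m)"
      using energy_functional_midpoint[OF us us lower] by (simp add: dist_norm)
    also have "\<dots> < \<epsilon>\<^sup>2"
      using M[OF that(1)] M[OF that(2)] abs_less_iff[of _ "\<epsilon>\<^sup>2 / 4"] by fastforce
    finally have "(dist (g (us n)) (g (us k)))\<^sup>2 < \<epsilon>\<^sup>2" .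
    then show ?thesis
      using \<open>\<epsilon> > 0\<close> by (simp add: power_less_imp_less_base)
  qed
  then show "\<exists>M. \<forall>n\<ge>M. \<forall>k\<ge>M. dist (g (us n)) (g (us k)) < \<epsilon>"
    by blast
qed

lemma energy_functional_minimizer_represents:
  assumes us: "\<And>n. us n \<in> D" and lim: "(\<lambda>n. energy_functional (us n)) \<longlonglongrightarrow> m"
    and lower: "\<forall>x\<in>D. m \<le> energy_functional x"
    and w: "(\<lambda>n. g (us n)) \<longlonglongrightarrow> w" and u: "u \<in> D"
  shows "ip (g u) w = f u"
proof -
  have "2 * Re (t * (f u - ip (g u) w)) \<le> (cmod t)\<^sup>2 * (norm (g u))\<^sup>2" for t
  proof -
    have "m \<le> (norm (g (us n) + scaleC t (g u)))\<^sup>2 + energy_functional (us n)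
                - (norm (g (us n)))\<^sup>2 - 2 * Re (t * f u)" for n
    proof -
      have "m \<le> energy_functional (us n + scaleC t u)"
        using lower D_add[OF us D_scaleC[OF u]] by blast
      then show ?thesis
        using us u by (simp add: g_add g_scaleC f_add f_scaleC D_scaleC)
    qed
    then have "m \<le> (norm (w + scaleC t (g u)))\<^sup>2 + m - (norm w)\<^sup>2 - 2 * Re (t * f u)"
      by (intro LIMSEQ_le_const[where X="\<lambda>n. (norm (g (us n) + scaleC t (g u)))\<^sup>2 +
          energy_functional (us n) - (norm (g (us n)))\<^sup>2 - 2 * Re (t * f u)"]
          tendsto_intros w lim) auto
    moreover have "Re (ip w (scaleC t (g u))) = Re (t * ip (g u) w)"
      by (subst ip_cnj_commute) (simp add: ip_scaleC_left)
    ultimately show ?thesis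
      by (simp add: norm_add_square norm_scaleC algebra_simps)
  qed
  then show ?thesis
    using quadratic_bound_imp_zero[of "(norm (g u))\<^sup>2"] by fastforce
qed

lemma riesz_representation:
  assumes D_nonempty: "D \<noteq> {}" and f_bound: "\<And>u. u \<in> D \<Longrightarrow> cmod (f u) \<le> K * norm (g u)"
  shows "\<exists>w. \<forall>u\<in>D. ip (g u) w = f u"
proof -
  have "- (K\<^sup>2) \<le> energy_functional u" if "u \<in> D" for u
  proof -
    have "Re (f u) \<le> K * norm (g u)"
      using f_bound[OF that] complex_Re_le_cmod[of "f u"] by linarith
    moreover have "0 \<le> (norm (g u) - K)\<^sup>2"
      by simp
    ultimately show ?thesis
      by (simp add: power2_diff algebra_simps)
  qed
  then have bdd: "bdd_below (energy_functional ` D)"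
    by (auto intro!: bdd_belowI)
  define m where "m = Inf (energy_functional ` D)"
  have lower: "\<forall>x\<in>D. m \<le> energy_functional x"
    unfolding m_def using bdd by (simp add: cInf_lower)
  have "m \<in> closure (energy_functional ` D)"
    unfolding m_def using D_nonempty bdd by (intro closure_contains_Inf) auto
  then obtain us where us: "\<And>n. us n \<in> D" and lim: "(\<lambda>n. energy_functional (us n)) \<longlonglongrightarrow> m"
    using closure_image_sequentially by blast
  then obtain w where "(\<lambda>n. g (us n)) \<longlonglongrightarrow> w"
    using energy_functional_minimizing_Cauchy[OF us lim lower] Cauchy_convergent_iff convergent_def
    by blast
  then show ?thesis
    using energy_functional_minimizer_represents[OF us lim lower] by blast
qed

end

end

section \<open>The energy space of a positive operator\<close>

locale energy_space =
  fixes ip :: "'h::{cnormed_vector,banach} \<Rightarrow> 'h \<Rightarrow> complex"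
    and D :: "'a::cnormed_vector set" and A :: "'a \<Rightarrow> 'a \<Rightarrow> complex"
    and \<iota> :: "('a \<Rightarrow> complex) \<Rightarrow> 'h"
  assumes is_op: "is_op D A" and completion: "energy_completion D A ip \<iota>"

sublocale energy_space \<subseteq> complex_inner ip
  using completion by unfold_locales (simp add: energy_completion_def)

context energy_space
begin

abbreviation "J \<equiv> Jstar D A ip \<iota>"
abbreviation "dom_J \<equiv> Jstar_dom D A \<iota>"

lemma D_zero: "0 \<in> D"
  using is_op unfolding is_op_def by blast

lemma D_add: "x \<in> D \<Longrightarrow> y \<in> D \<Longrightarrow> x + y \<in> D"
  using is_op unfolding is_op_def by blast

lemma D_scaleC: "x \<in> D \<Longrightarrow> scaleC c x \<in> D"
  using is_op unfolding is_op_def by blast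

lemma D_diff: "x \<in> D \<Longrightarrow> y \<in> D \<Longrightarrow> x - y \<in> D"
  using D_add[of x "scaleC (-1) y"] D_scaleC[of y "-1"] by (simp add: scaleC_minus_one)

lemma A_in_cdual: "x \<in> D \<Longrightarrow> A x \<in> cdual"
  using is_op unfolding is_op_def by blast

lemma A_add: "x \<in> D \<Longrightarrow> y \<in> D \<Longrightarrow> A (x + y) = (\<lambda>z. A x z + A y z)"
  using is_op unfolding is_op_def by blast

lemma A_scaleC: "x \<in> D \<Longrightarrow> A (scaleC c x) = (\<lambda>z. c * A x z)"
  using is_op unfolding is_op_def by blast

lemma A_add_left: "x \<in> D \<Longrightarrow> y \<in> D \<Longrightarrow> A (x + y) z = A x z + A y z"
  by (simp add: A_add)

lemma A_scaleC_left: "x \<in> D \<Longrightarrow> A (scaleC c x) z = c * A x z"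
  by (simp add: A_scaleC)

lemma embed_add: "x \<in> D \<Longrightarrow> y \<in> D \<Longrightarrow> \<iota> (A (x + y)) = \<iota> (A x) + \<iota> (A y)"
  using completion unfolding energy_completion_def by (simp add: A_add)

lemma embed_scaleC: "x \<in> D \<Longrightarrow> \<iota> (A (scaleC c x)) = scaleC c (\<iota> (A x))"
  using completion unfolding energy_completion_def by (simp add: A_scaleC)

lemma embed_diff: "x \<in> D \<Longrightarrow> y \<in> D \<Longrightarrow> \<iota> (A (x - y)) = \<iota> (A x) - \<iota> (A y)"
  using embed_add[of x "scaleC (-1) y"] embed_scaleC[of y "-1"] D_scaleC[of y "-1"]
  by (simp add: scaleC_minus_one)

lemma ip_embed: "x \<in> D \<Longrightarrow> y \<in> D \<Longrightarrow> ip (\<iota> (A x)) (\<iota> (A y)) = A x y"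
  using completion unfolding energy_completion_def by blast

lemma embed_dense: "closure (\<iota> ` A ` D) = UNIV"
  using completion unfolding energy_completion_def by blast

lemma norm_embed_square: "x \<in> D \<Longrightarrow> (norm (\<iota> (A x)))\<^sup>2 = Re (A x x)"
  using ip_embed[of x x] ip_self by (metis Re_complex_of_real)

lemma embed_approximation: "\<exists>us. (\<forall>n. us n \<in> D) \<and> (\<lambda>n. \<iota> (A (us n))) \<longlonglongrightarrow> h"
proof -
  have "h \<in> closure ((\<lambda>u. \<iota> (A u)) ` D)"
    using embed_dense by (simp add: image_image)
  then show ?thesis
    by (rule closure_image_sequentially)
qed

lemma Jstar_domI: "(\<And>x. x \<in> D \<Longrightarrow> cmod (A x y) \<le> K * norm (\<iota> (A x))) \<Longrightarrow> y \<in> dom_J"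
  unfolding Jstar_dom_def by blast

lemma Jstar_domE:
  assumes "y \<in> dom_J"
  obtains K where "\<And>x. x \<in> D \<Longrightarrow> cmod (A x y) \<le> K * norm (\<iota> (A x))"
  using assms unfolding Jstar_dom_def by blast

lemma Jstar_dom_add:
  assumes "y1 \<in> dom_J" "y2 \<in> dom_J"
  shows "y1 + y2 \<in> dom_J"
proof -
  obtain K1 K2 where
    K1: "\<And>x. x \<in> D \<Longrightarrow> cmod (A x y1) \<le> K1 * norm (\<iota> (A x))" and
    K2: "\<And>x. x \<in> D \<Longrightarrow> cmod (A x y2) \<le> K2 * norm (\<iota> (A x))"
    using assms by (metis Jstar_domE)
  have "cmod (A x (y1 + y2)) \<le> (K1 + K2) * norm (\<iota> (A x))" if "x \<in> D" for x
  proof -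
    have "cmod (A x (y1 + y2)) \<le> cmod (A x y1) + cmod (A x y2)"
      using that by (simp add: cdual_add[OF A_in_cdual] norm_triangle_ineq)
    also have "\<dots> \<le> (K1 + K2) * norm (\<iota> (A x))"
      using K1[OF that] K2[OF that] by (simp add: distrib_right add_mono)
    finally show ?thesis .
  qed
  then show ?thesis
    by (rule Jstar_domI)
qed

lemma Jstar_dom_scaleC:
  assumes "y \<in> dom_J"
  shows "scaleC c y \<in> dom_J"
proof -
  obtain K where "\<And>x. x \<in> D \<Longrightarrow> cmod (A x y) \<le> K * norm (\<iota> (A x))"
    using assms by (metis Jstar_domE)
  then have "cmod (A x (scaleC c y)) \<le> (cmod c * K) * norm (\<iota> (A x))" if "x \<in> D" for x
    using that by (simp add: cdual_scaleC[OF A_in_cdual] norm_mult mult.assoc mult_left_mono)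
  then show ?thesis
    by (rule Jstar_domI)
qed

lemma Jstar_characterization:
  assumes "y \<in> dom_J"
  shows "\<exists>w. \<forall>u\<in>D. ip (\<iota> (A u)) w = A u y"
proof -
  obtain K where K: "\<And>x. x \<in> D \<Longrightarrow> cmod (A x y) \<le> K * norm (\<iota> (A x))"
    using Jstar_domE[OF assms] by metis
  have "D \<noteq> {}"
    using D_zero by blast
  then show ?thesis
    using riesz_representation[where g="\<lambda>u. \<iota> (A u)" and f="\<lambda>u. A u y",
        OF D_add D_scaleC embed_add embed_scaleC A_add_left A_scaleC_left] K
    by blast
qed

lemma Jstar_eqI:
  assumes "y \<in> dom_J" "\<forall>u\<in>D. ip (\<iota> (A u)) w = A u y"
  shows "J y = w"
proof -
  have unique: "w1 = w2" if "\<forall>u\<in>D. ip (\<iota> (A u)) w1 = A u y" "\<forall>u\<in>D. ip (\<iota> (A u)) w2 = A u y"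
    for w1 w2
    using that by (intro ip_right_eq_if_dense[OF embed_dense]) auto
  show ?thesis
    unfolding Jstar_def using assms(2) unique by (intro the_equality) auto
qed

lemma ip_embed_Jstar: "y \<in> dom_J \<Longrightarrow> u \<in> D \<Longrightarrow> ip (\<iota> (A u)) (J y) = A u y"
  using Jstar_characterization Jstar_eqI by metis

lemma Jstar_add: "y1 \<in> dom_J \<Longrightarrow> y2 \<in> dom_J \<Longrightarrow> J (y1 + y2) = J y1 + J y2"
  by (rule Jstar_eqI) (auto simp: Jstar_dom_add ip_add_right ip_embed_Jstar cdual_add A_in_cdual)

lemma Jstar_scaleC: "y \<in> dom_J \<Longrightarrow> J (scaleC c y) = scaleC c (J y)"
  by (rule Jstar_eqI) (auto simp: Jstar_dom_scaleC ip_scaleC_right ip_embed_Jstar cdual_scaleC A_in_cdual)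

end

section \<open>Operators commuting with a positive operator\<close>

locale energy_commutant = energy_space ip D A \<iota>
  for ip :: "'h::{cnormed_vector,banach} \<Rightarrow> 'h \<Rightarrow> complex"
    and D :: "'a::cnormed_vector set" and A and \<iota> +
  fixes E :: "'a \<Rightarrow> 'a"
  assumes E_bounded_linear: "bounded_linear E"
    and E_D: "\<And>x. x \<in> D \<Longrightarrow> E x \<in> D"
    and dual_E_A: "\<And>x. x \<in> D \<Longrightarrow> dual_op E (A x) = A (E x)"
begin

lemma A_E:
  assumes "x \<in> D"
  shows "A x (E z) = A (E x) z"
proof -
  have "dual_op E (A x) z = A (E x) z"
    using dual_E_A[OF assms] by simp
  then show ?thesis
    by (simp add: dual_op_def)
qed

lemma funpow_E_D: "u \<in> D \<Longrightarrow> (E ^^ k) u \<in> D"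
  by (induction k) (auto simp: E_D)

lemma A_funpow_E:
  assumes u: "u \<in> D"
  shows "A ((E ^^ k) u) z = A u ((E ^^ k) z)"
proof (induction k arbitrary: z)
  case (Suc k)
  have "A ((E ^^ Suc k) u) z = A ((E ^^ k) u) (E z)"
    using A_E[OF funpow_E_D[OF u]] by simp
  also have "\<dots> = A u ((E ^^ k) (E z))"
    by (rule Suc.IH)
  finally show ?case
    by (simp add: funpow_swap1)
qed simp

lemma norm_embed_funpow_E_log_convex:
  assumes u: "u \<in> D"
  shows "(norm (\<iota> (A ((E ^^ Suc k) u))))\<^sup>2
           \<le> norm (\<iota> (A ((E ^^ k) u))) * norm (\<iota> (A ((E ^^ Suc (Suc k)) u)))"
proof -
  define v where "v = (E ^^ k) u"
  have v: "v \<in> D"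
    unfolding v_def using u by (rule funpow_E_D)
  have "(norm (\<iota> (A (E v))))\<^sup>2 = Re (A v (E (E v)))"
    using v by (simp add: norm_embed_square E_D A_E)
  also have "\<dots> \<le> cmod (ip (\<iota> (A v)) (\<iota> (A (E (E v)))))"
    using v by (simp add: ip_embed E_D complex_Re_le_cmod)
  also have "\<dots> \<le> norm (\<iota> (A v)) * norm (\<iota> (A (E (E v))))"
    by (rule norm_ip_le)
  finally show ?thesis
    by (simp add: v_def)
qed

lemma norm_embed_funpow_E_growth:
  assumes u: "u \<in> D" and N: "N > 0" "\<And>x. norm (E x) \<le> N * norm x"
  obtains L where "\<And>k. (norm (\<iota> (A ((E ^^ k) u))))\<^sup>2 \<le> L * N ^ (2 * k)"
proof -
  have norm_funpow: "norm ((E ^^ k) z) \<le> N ^ k * norm z" for k z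
    by (induction k) (auto intro: order_trans[OF N(2)] simp: N(1) mult.assoc)
  obtain K where K: "\<And>z. cmod (A u z) \<le> K * norm z" "K \<ge> 0"
    using cdual_bounded[OF A_in_cdual[OF u]] by blast
  have "(norm (\<iota> (A ((E ^^ k) u))))\<^sup>2 \<le> (K * norm u) * N ^ (2 * k)" for k
  proof -
    have "(norm (\<iota> (A ((E ^^ k) u))))\<^sup>2 \<le> cmod (A u ((E ^^ (k + k)) u))"
      using u by (simp add: norm_embed_square funpow_E_D A_funpow_E funpow_add complex_Re_le_cmod)
    also have "\<dots> \<le> K * (N ^ (k + k) * norm u)"
      using K(1)[of "(E ^^ (k + k)) u"] mult_left_mono[OF norm_funpow K(2)] by (rule order_trans)
    finally show ?thesis
      by (simp add: mult_ac flip: mult_2)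
  qed
  then show ?thesis
    using that by blast
qed

lemma norm_embed_E_le: "\<exists>N>0. \<forall>u\<in>D. norm (\<iota> (A (E u))) \<le> N * norm (\<iota> (A u))"
proof -
  obtain N where "N > 0" "\<And>x. norm (E x) \<le> norm x * N"
    using bounded_linear.pos_bounded[OF E_bounded_linear] by blast
  then have N: "N > 0" "\<And>x. norm (E x) \<le> N * norm x"
    by (simp_all add: mult.commute)
  have "norm (\<iota> (A (E u))) \<le> N * norm (\<iota> (A u))" if u: "u \<in> D" for u
  proof -
    obtain L where "\<And>k. (norm (\<iota> (A ((E ^^ k) u))))\<^sup>2 \<le> L * N ^ (2 * k)"
      using norm_embed_funpow_E_growth[OF u N] by blast
    then have "norm (\<iota> (A ((E ^^ 1) u))) \<le> N * norm (\<iota> (A ((E ^^ 0) u)))"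
      by (intro log_convex_ratio_le[where L=L] norm_embed_funpow_E_log_convex u N) auto
    then show ?thesis
      by simp
  qed
  then show ?thesis
    using N(1) by blast
qed

lemma Jstar_dom_E:
  assumes y: "y \<in> dom_J"
  shows "E y \<in> dom_J"
proof -
  obtain N where N: "\<forall>u\<in>D. norm (\<iota> (A (E u))) \<le> N * norm (\<iota> (A u))"
    using norm_embed_E_le by blast
  have "cmod (A x (E y)) \<le> (N * norm (J y)) * norm (\<iota> (A x))" if x: "x \<in> D" for x
  proof -
    have "A x (E y) = ip (\<iota> (A (E x))) (J y)"
      using ip_embed_Jstar[OF y E_D[OF x]] A_E[OF x] by simp
    then have "cmod (A x (E y)) \<le> norm (\<iota> (A (E x))) * norm (J y)"
      using norm_ip_le by simp
    also have "\<dots> \<le> (N * norm (\<iota> (A x))) * norm (J y)"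
      using N x by (simp add: mult_right_mono)
    finally show ?thesis
      by (simp add: mult_ac)
  qed
  then show ?thesis
    by (rule Jstar_domI)
qed

text \<open>In operator terms: the bounded extension of \<iota>(Au) \<mapsto> \<iota>(AEu) to H_A maps J_A* x to J_A* (Ex).\<close>

lemma tendsto_embed_E_Jstar:
  assumes x: "x \<in> dom_J" and us: "\<And>n. us n \<in> D" and lim: "(\<lambda>n. \<iota> (A (us n))) \<longlonglongrightarrow> J x"
  shows "(\<lambda>n. \<iota> (A (E (us n)))) \<longlonglongrightarrow> J (E x)"
proof -
  obtain N where N: "N > 0" "\<forall>u\<in>D. norm (\<iota> (A (E u))) \<le> N * norm (\<iota> (A u))"
    using norm_embed_E_le by blast
  have "Cauchy (\<lambda>n. \<iota> (A (E (us n))))"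
  proof (rule Cauchy_if_dist_le[OF LIMSEQ_imp_Cauchy[OF lim] _ N(1)])
    fix m n
    have "dist (\<iota> (A (E (us m)))) (\<iota> (A (E (us n)))) = norm (\<iota> (A (E (us m) - E (us n))))"
      using us by (simp add: dist_norm embed_diff E_D)
    also have "E (us m) - E (us n) = E (us m - us n)"
      by (simp add: linear_diff[OF bounded_linear.linear[OF E_bounded_linear]])
    also have "norm (\<iota> (A (E (us m - us n)))) \<le> N * norm (\<iota> (A (us m - us n)))"
      using N(2) D_diff[OF us us] by blast
    also have "\<dots> = N * dist (\<iota> (A (us m))) (\<iota> (A (us n)))"
      using us by (simp add: dist_norm embed_diff)
    finally show "dist (\<iota> (A (E (us m)))) (\<iota> (A (E (us n)))) \<le> N * dist (\<iota> (A (us m))) (\<iota> (A (us n)))" .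
  qed
  then obtain w where w: "(\<lambda>n. \<iota> (A (E (us n)))) \<longlonglongrightarrow> w"
    using Cauchy_convergent_iff convergent_def by blast
  have "ip (\<iota> (A v)) w = A v (E x)" if v: "v \<in> D" for v
  proof -
    have "(\<lambda>n. ip (\<iota> (A v)) (\<iota> (A (E (us n))))) \<longlonglongrightarrow> ip (\<iota> (A v)) w"
      by (rule bounded_linear.tendsto[OF bounded_linear_ip_right w])
    moreover have "(\<lambda>n. ip (\<iota> (A (E v))) (\<iota> (A (us n)))) \<longlonglongrightarrow> ip (\<iota> (A (E v))) (J x)"
      by (rule bounded_linear.tendsto[OF bounded_linear_ip_right lim])
    moreover have "ip (\<iota> (A v)) (\<iota> (A (E (us n)))) = ip (\<iota> (A (E v))) (\<iota> (A (us n)))" for n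
      using v us by (simp add: ip_embed E_D A_E)
    ultimately have "ip (\<iota> (A v)) w = ip (\<iota> (A (E v))) (J x)"
      using LIMSEQ_unique by simp
    then show ?thesis
      using ip_embed_Jstar[OF x E_D[OF v]] A_E[OF v] by simp
  qed
  then have "J (E x) = w"
    by (intro Jstar_eqI Jstar_dom_E x) blast
  then show ?thesis
    using w by simp
qed

lemma Jstar_E_symmetric:
  assumes x: "x \<in> dom_J" and y: "y \<in> dom_J"
  shows "ip (J (E x)) (J y) = ip (J x) (J (E y))"
proof -
  obtain us where us: "\<And>n. us n \<in> D" and lim: "(\<lambda>n. \<iota> (A (us n))) \<longlonglongrightarrow> J x"
    using embed_approximation by blast
  have "(\<lambda>n. ip (\<iota> (A (E (us n)))) (J y)) \<longlonglongrightarrow> ip (J (E x)) (J y)"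
    by (rule bounded_linear.tendsto[OF bounded_linear_ip_left tendsto_embed_E_Jstar[OF x us lim]])
  moreover have "(\<lambda>n. ip (\<iota> (A (us n))) (J (E y))) \<longlonglongrightarrow> ip (J x) (J (E y))"
    by (rule bounded_linear.tendsto[OF bounded_linear_ip_left lim])
  moreover have "ip (\<iota> (A (E (us n)))) (J y) = ip (\<iota> (A (us n))) (J (E y))" for n
    using us y by (simp add: ip_embed_Jstar Jstar_dom_E E_D A_E)
  ultimately show ?thesis
    using LIMSEQ_unique by simp
qed

end

lemma formsum_dom_eq_form_operator_dom:
  "formsum_dom DA A ipA \<iota>A DB B ipB \<iota>B
     = form_operator_dom (form_space DA A \<iota>A DB B \<iota>B) (form_t DA A ipA \<iota>A DB B ipB \<iota>B)"
  unfolding formsum_dom_def form_operator_dom_def ..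

lemma formsum_eq_form_operator:
  "formsum DA A ipA \<iota>A DB B ipB \<iota>B
     = form_operator (form_space DA A \<iota>A DB B \<iota>B) (form_t DA A ipA \<iota>A DB B ipB \<iota>B)"
  unfolding formsum_def form_operator_def ..

theorem theorem5:
  fixes DA DB :: "'a::{cnormed_vector,banach} set"
    and A B :: "'a \<Rightarrow> 'a \<Rightarrow> complex"
    and ipA :: "'ha::{cnormed_vector,banach} \<Rightarrow> 'ha \<Rightarrow> complex"
    and \<iota>A :: "('a \<Rightarrow> complex) \<Rightarrow> 'ha"
    and ipB :: "'hb::{cnormed_vector,banach} \<Rightarrow> 'hb \<Rightarrow> complex"
    and \<iota>B :: "('a \<Rightarrow> complex) \<Rightarrow> 'hb"
    and E :: "'a \<Rightarrow> 'a"
  assumes refl: "reflexive_space TYPE('a)"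
    and opA: "is_op DA A" and posA: "pos_op DA A" and lbA: "pos_lower_bound DA A"
    and saA: "self_adjoint_op DA A"
    and opB: "is_op DB B" and posB: "pos_op DB B" and lbB: "pos_lower_bound DB B"
    and saB: "self_adjoint_op DB B"
    and HA: "energy_completion DA A ipA \<iota>A"
    and HB: "energy_completion DB B ipB \<iota>B"
    and dense: "closure (form_space DA A \<iota>A DB B \<iota>B) = UNIV"
    and E_lin: "bounded_linear E" and E_C: "\<forall>c x. E (scaleC c x) = scaleC c (E x)"
    and E_DA: "E ` DA \<subseteq> DA" and E_DB: "E ` DB \<subseteq> DB"
    and EA: "\<forall>x\<in>DA. E x \<in> DA \<and> dual_op E (A x) = A (E x)"
    and EB: "\<forall>x\<in>DB. E x \<in> DB \<and> dual_op E (B x) = B (E x)"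
  shows "\<forall>x \<in> formsum_dom DA A ipA \<iota>A DB B ipB \<iota>B.
           E x \<in> formsum_dom DA A ipA \<iota>A DB B ipB \<iota>B
           \<and> dual_op E (formsum DA A ipA \<iota>A DB B ipB \<iota>B x) = formsum DA A ipA \<iota>A DB B ipB \<iota>B (E x)"
proof -
  interpret EA: energy_commutant ipA DA A \<iota>A E
    using opA HA E_lin EA
    by (intro energy_commutant.intro energy_space.intro energy_commutant_axioms.intro) auto
  interpret EB: energy_commutant ipB DB B \<iota>B E
    using opB HB E_lin EB
    by (intro energy_commutant.intro energy_space.intro energy_commutant_axioms.intro) auto
  let ?S = "form_space DA A \<iota>A DB B \<iota>B" and ?t = "form_t DA A ipA \<iota>A DB B ipB \<iota>B"
  have S: "?S = EA.dom_J \<inter> EB.dom_J"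
    unfolding form_space_def ..
  have t: "?t x y = ipA (EA.J x) (EA.J y) + ipB (EB.J x) (EB.J y)" for x y
    unfolding form_t_def ..
  show ?thesis
    unfolding formsum_dom_eq_form_operator_dom formsum_eq_form_operator
  proof (intro ballI form_operator_intertwining dense E_lin)
    show "a + b \<in> ?S" "scaleC c a \<in> ?S" "E a \<in> ?S" if "a \<in> ?S" "b \<in> ?S" for a b c
      using that by (auto simp: S EA.Jstar_dom_add EB.Jstar_dom_add EA.Jstar_dom_scaleC
          EB.Jstar_dom_scaleC EA.Jstar_dom_E EB.Jstar_dom_E)
    show "?t x (a + b) = ?t x a + ?t x b" "?t x (scaleC c a) = cnj c * ?t x a"
      if "a \<in> ?S" "b \<in> ?S" for x a b c
      using that by (auto simp: S t EA.Jstar_add EB.Jstar_add EA.ip_add_right EB.ip_add_right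
          EA.Jstar_scaleC EB.Jstar_scaleC EA.ip_scaleC_right EB.ip_scaleC_right distrib_left)
    show "?t (E x) y = ?t x (E y)" if "x \<in> ?S" "y \<in> ?S" for x y
      using that by (simp add: S t EA.Jstar_E_symmetric EB.Jstar_E_symmetric)
  qed (use E_C in auto)
qed

end
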